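(* Let $T\geq 3$ be an integer, $L>0$, $D>0$, and let $\mathcal{K}\subset\mathbb{R}^d$ be a nonempty closed convex set with diameter at most $D$. For $t=1,\dots,T$ let $\ell_t(x)=\langle g_t,x\rangle$ be linear cost functions with $\|g_t\|\leq L$. Set $$\eta=\frac{D}{2L}\left(\frac{3}{T}\right)^{3/4},\qquad \sigma=\min\left(1,\sqrt{\frac{3}{T}}\right).$$ Let $x_1\in\mathcal{K}$ and define the Online Frank--Wolfe iterates: for $t=1,\dots,T$, $\mathrm{dir}_t=\eta\sum_{s=1}^t g_s+(x_t-x_1)$, $v_t\in\arg\min_{v\in\mathcal{K}}\langle\mathrm{dir}_t,v\rangle$, $x_{t+1}=(1-\sigma)x_t+\sigma v_t$. Define the Follow-The-Regularized-Leader iterates $y_1=x_1$ and, for $t=1,\dots,T$, $$y_{t+1}=\arg\min_{y\in\mathcal{K}}\ \eta\Big\langle\sum_{s=1}^t g_s,y\Big\rangle+\frac12\|y-x_1\|^2.$$ For $0\leq t\leq T$ define the potential $$\phi_t\triangleq\sum_{s=1}^t\langle g_s,x_s-y_{t+1}\rangle+\frac{1}{6\eta}\|x_{t+1}-y_{t+1}\|^2-\frac{1}{2\eta}\|y_{t+1}-x_1\|^2.$$ Then for every $t\in\{1,\dots,T\}$, $$\phi_t-\phi_{t-1}\leq\frac{2D}{L\,3^{3/4}T^{1/4}}\|g_t\|^2+\frac{L}{D\,3^{3/4}T^{1/4}}\|x_t-v_t\|^2.$$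
   Context: $\|\cdot\|$ is the Euclidean norm; $v_t$ is any minimizer of the linear function over $\mathcal{K}$ (the output of a linear optimization oracle). The FTRL minimizer is unique by strong convexity. *)

theory Defs
  imports "HOL-Analysis.Analysis"
begin

definition ofw_phi :: "real \<Rightarrow> (nat \<Rightarrow> 'a::euclidean_space) \<Rightarrow> (nat \<Rightarrow> 'a) \<Rightarrow> (nat \<Rightarrow> 'a) \<Rightarrow> nat \<Rightarrow> real" where
  "ofw_phi \<eta> g x y t =
     (\<Sum>s=1..t. g s \<bullet> (x s - y (t+1)))
     + (1 / (6*\<eta>)) * (norm (x (t+1) - y (t+1)))^2
     - (1 / (2*\<eta>)) * (norm (y (t+1) - x 1))^2"

end

theory Submission
  imports Defs
begin

text \<open>
  Write \<open>S\<close> for the gradient sum up to \<open>t - 1\<close>, \<open>X = x t\<close>, \<open>Y = y t\<close>, \<open>Z = y (t + 1)\<close>,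
  \<open>V = v t\<close>. Every FTRL point is the projection of \<open>x 1 - \<eta> S\<close> onto \<open>K\<close>, so it satisfies
  a variational inequality. Tested at \<open>Z\<close> and \<open>Y\<close>, these inequalities give the stability
  bound \<open>\<parallel>Y - Z\<parallel>\<^sup>2 \<le> \<eta> g t \<bullet> (Y - Z)\<close>; combined with the optimality of \<open>V\<close> for
  the linearised objective they give \<open>(X - Z) \<bullet> (V - Z) \<le> 0\<close>, so the Frank-Wolfe step
  contracts: \<open>\<parallel>x (t + 1) - Z\<parallel>\<^sup>2 \<le> (1 - 2\<sigma>) \<parallel>X - Z\<parallel>\<^sup>2 + \<sigma>\<^sup>2 \<parallel>X - V\<parallel>\<^sup>2\<close>.
  After these substitutions \<open>\<eta> (\<phi>\<^sub>t - \<phi>\<^sub>t\<^sub>-\<^sub>1)\<close> is a quadratic form in \<open>X - Y\<close> and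
  \<open>Y - Z\<close>, bounded by completing the square by \<open>4/(3\<sigma>) \<eta>\<^sup>2 \<parallel>g t\<parallel>\<^sup>2 + \<sigma>\<^sup>2/6 \<parallel>X - V\<parallel>\<^sup>2\<close>;
  the choice of \<open>\<eta>\<close> and \<open>\<sigma>\<close> turns these coefficients into the stated ones.
\<close>

lemma ftrl_variational_inequality:
  fixes S y w x1 :: "'a::euclidean_space"
  assumes "convex K" "closed K" "y \<in> K" "w \<in> K"
    and y_min: "\<forall>w\<in>K. \<eta> * (S \<bullet> y) + 1/2 * (norm (y - x1))^2 \<le> \<eta> * (S \<bullet> w) + 1/2 * (norm (w - x1))^2"
  shows "0 \<le> (\<eta> *\<^sub>R S + (y - x1)) \<bullet> (w - y)"
proof -
  define a where "a = x1 - \<eta> *\<^sub>R S"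
  define F where "F z = \<eta> * (S \<bullet> z) + 1/2 * (norm (z - x1))^2" for z
  have sq_dist: "(dist a z)^2 = 2 * F z + (norm (\<eta> *\<^sub>R S))^2 - 2 * \<eta> * (S \<bullet> x1)" for z
    unfolding a_def F_def dist_norm power2_norm_eq_inner
    by (simp add: inner_commute algebra_simps)
  have "dist a y \<le> dist a z" if "z \<in> K" for z
  proof (rule power2_le_imp_le)
    show "(dist a y)^2 \<le> (dist a z)^2"
      using y_min that unfolding sq_dist F_def[symmetric] by auto
  qed simp
  then have "(a - y) \<bullet> (w - y) \<le> 0"
    using any_closest_point_dot assms(1-4) by blast
  then show ?thesis
    by (simp add: a_def algebra_simps)
qed

lemma ftrl_iterates_optimality:
  fixes g y x :: "nat \<Rightarrow> 'a::euclidean_space"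
  assumes "convex K" "closed K" "x 1 \<in> K" "y 1 = x 1"
    and y_in: "\<forall>t\<in>{1..T}. y (t+1) \<in> K"
    and y_min: "\<forall>t\<in>{1..T}. \<forall>w\<in>K.
        \<eta> * ((\<Sum>s=1..t. g s) \<bullet> y (t+1)) + 1/2 * (norm (y (t+1) - x 1))^2
          \<le> \<eta> * ((\<Sum>s=1..t. g s) \<bullet> w) + 1/2 * (norm (w - x 1))^2"
  shows "k \<le> T \<Longrightarrow> y (k + 1) \<in> K"
    and "k \<le> T \<Longrightarrow> w \<in> K \<Longrightarrow>
      0 \<le> (\<eta> *\<^sub>R (\<Sum>s=1..k. g s) + (y (k + 1) - x 1)) \<bullet> (w - y (k + 1))"
proof -
  assume "k \<le> T"
  have "y (k + 1) \<in> K \<and> (\<forall>w\<in>K.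
      \<eta> * ((\<Sum>s=1..k. g s) \<bullet> y (k + 1)) + 1/2 * (norm (y (k + 1) - x 1))^2
        \<le> \<eta> * ((\<Sum>s=1..k. g s) \<bullet> w) + 1/2 * (norm (w - x 1))^2)"
  proof (cases k)
    case 0
    then show ?thesis
      using assms(3,4) by simp
  next
    case Suc
    then have "k \<in> {1..T}"
      using \<open>k \<le> T\<close> by simp
    then show ?thesis
      using y_in y_min by blast
  qed
  then show "y (k + 1) \<in> K"
    and "w \<in> K \<Longrightarrow> 0 \<le> (\<eta> *\<^sub>R (\<Sum>s=1..k. g s) + (y (k + 1) - x 1)) \<bullet> (w - y (k + 1))"
    using ftrl_variational_inequality[OF assms(1,2)] by blast+
qed

lemma norm_convex_step_sq_le:
  fixes X V Z :: "'a::real_inner"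
  assumes "0 \<le> \<sigma>" and "(X - Z) \<bullet> (V - Z) \<le> 0"
  shows "(norm ((1 - \<sigma>) *\<^sub>R X + \<sigma> *\<^sub>R V - Z))^2
    \<le> (1 - 2*\<sigma>) * (norm (X - Z))^2 + \<sigma>^2 * (norm (X - V))^2"
proof -
  have split: "(1 - \<sigma>) *\<^sub>R X + \<sigma> *\<^sub>R V - Z = (X - Z) + \<sigma> *\<^sub>R (V - X)"
    by (simp add: algebra_simps)
  have "(norm ((1 - \<sigma>) *\<^sub>R X + \<sigma> *\<^sub>R V - Z))^2
      = (norm (X - Z))^2 + 2*\<sigma> * ((X - Z) \<bullet> (V - X)) + \<sigma>^2 * (norm (X - V))^2"
    unfolding split power2_norm_eq_inner
    by (simp add: inner_commute
        algebra_simps power2_eq_square)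
  moreover have "\<sigma> * ((X - Z) \<bullet> (V - X)) \<le> - \<sigma> * (norm (X - Z))^2"
  proof -
    have "(X - Z) \<bullet> (V - X) = (X - Z) \<bullet> (V - Z) - (norm (X - Z))^2"
      by (simp add: power2_norm_eq_inner inner_diff_right)
    then show ?thesis
      using assms by (simp add: right_diff_distrib mult_nonneg_nonpos)
  qed
  ultimately show ?thesis
    by (simp add: left_diff_distrib)
qed

lemma quadratic_potential_le:
  fixes p q u :: "'a::real_inner"
  assumes "0 < \<sigma>" "\<sigma> \<le> 1" and stable: "(norm q)^2 \<le> u \<bullet> q"
  shows "u \<bullet> (p + q) - 1/2 * (norm q)^2 + 1/6 * ((1 - 2*\<sigma>) * (norm (p + q))^2 - (norm p)^2)
    \<le> 4 / (3*\<sigma>) * (norm u)^2"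
proof -
  define w where "w = u + ((1 - 2*\<sigma>) / 3) *\<^sub>R q"
  have q_le_u: "norm q \<le> norm u"
  proof (cases "q = 0")
    case False
    have "norm q * norm q \<le> norm u * norm q"
      using stable norm_cauchy_schwarz[of u q] by (simp add: power2_eq_square)
    then show ?thesis
      using False by simp
  qed simp
  have uq_le: "u \<bullet> q \<le> (norm u)^2"
    using norm_cauchy_schwarz[of u q] mult_left_mono[OF q_le_u norm_ge_zero[of u]]
    by (simp add: power2_eq_square)
  have qq_le: "(norm q)^2 \<le> (norm u)^2"
    using q_le_u by (simp add: power_mono)
  have young: "p \<bullet> w - \<sigma>/3 * (norm p)^2 \<le> 3 / (4*\<sigma>) * (norm w)^2"
  proof -
    have "0 \<le> \<sigma>/3 * (norm (p - (3 / (2*\<sigma>)) *\<^sub>R w))^2"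
      using \<open>0 < \<sigma>\<close> by simp
    also have "\<dots> = \<sigma>/3 * (norm p)^2 - p \<bullet> w + 3 / (4*\<sigma>) * (norm w)^2"
      using \<open>0 < \<sigma>\<close> by (simp add: power2_norm_eq_inner inner_diff_left inner_diff_right
          inner_commute field_simps)
    finally show ?thesis
      by linarith
  qed
  have "u \<bullet> (p + q) - 1/2 * (norm q)^2 + 1/6 * ((1 - 2*\<sigma>) * (norm (p + q))^2 - (norm p)^2)
      = p \<bullet> w - \<sigma>/3 * (norm p)^2 + u \<bullet> q - (1 + \<sigma>)/3 * (norm q)^2"
    unfolding w_def power2_norm_eq_inner
    by (simp add: inner_commute algebra_simps
        diff_divide_distrib add_divide_distrib)
  also have "\<dots> \<le> 3 / (4*\<sigma>) * (norm w)^2 + u \<bullet> q - (1 + \<sigma>)/3 * (norm q)^2"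
    using young by linarith
  also have "\<dots> = (9 * (norm u)^2 + 6 * (u \<bullet> q) + (1 - 8*\<sigma>) * (norm q)^2) / (12*\<sigma>)"
    using \<open>0 < \<sigma>\<close> unfolding w_def power2_norm_eq_inner
    by (simp add: inner_add_left inner_add_right inner_commute field_simps power2_eq_square)
  also have "\<dots> \<le> 16 * (norm u)^2 / (12*\<sigma>)"
  proof (rule divide_right_mono)
    have "0 \<le> \<sigma> * (norm q)^2"
      using \<open>0 < \<sigma>\<close> by simp
    then show "9 * (norm u)^2 + 6 * (u \<bullet> q) + (1 - 8*\<sigma>) * (norm q)^2 \<le> 16 * (norm u)^2"
      using uq_le qq_le unfolding left_diff_distrib by linarith
  qed (use \<open>0 < \<sigma>\<close> in simp)
  finally show ?thesis
    by simp
qed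

lemma ofw_potential_increment_le:
  fixes S g X Y Z V x1 :: "'a::real_inner"
  assumes "0 < \<eta>" "0 < \<sigma>" "\<sigma> \<le> 1"
    and prev_opt: "0 \<le> (\<eta> *\<^sub>R S + (Y - x1)) \<bullet> (Z - Y)"
    and next_opt_Y: "0 \<le> (\<eta> *\<^sub>R (S + g) + (Z - x1)) \<bullet> (Y - Z)"
    and next_opt_V: "0 \<le> (\<eta> *\<^sub>R (S + g) + (Z - x1)) \<bullet> (V - Z)"
    and lin_opt: "(\<eta> *\<^sub>R (S + g) + (X - x1)) \<bullet> V \<le> (\<eta> *\<^sub>R (S + g) + (X - x1)) \<bullet> Z"
  shows "g \<bullet> X - (S + g) \<bullet> Z + S \<bullet> Y
      + 1 / (6*\<eta>) * ((norm ((1 - \<sigma>) *\<^sub>R X + \<sigma> *\<^sub>R V - Z))^2 - (norm (X - Y))^2)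
      - 1 / (2*\<eta>) * ((norm (Z - x1))^2 - (norm (Y - x1))^2)
    \<le> 4*\<eta> / (3*\<sigma>) * (norm g)^2 + \<sigma>^2 / (6*\<eta>) * (norm (X - V))^2"
    (is "?lhs \<le> ?rhs")
proof -
  define u where "u = \<eta> *\<^sub>R g"
  have stable: "(norm (Y - Z))^2 \<le> u \<bullet> (Y - Z)"
  proof -
    have "(\<eta> *\<^sub>R S + (Y - x1)) \<bullet> (Z - Y) + (\<eta> *\<^sub>R (S + g) + (Z - x1)) \<bullet> (Y - Z)
        = u \<bullet> (Y - Z) - (norm (Y - Z))^2"
      unfolding u_def power2_norm_eq_inner
      by (simp add: inner_commute algebra_simps)
    then show ?thesis
      using prev_opt next_opt_Y by linarith
  qed
  have obtuse: "(X - Z) \<bullet> (V - Z) \<le> 0"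
  proof -
    have "(X - Z) \<bullet> (V - Z) = (\<eta> *\<^sub>R (S + g) + (X - x1)) \<bullet> (V - Z)
        - (\<eta> *\<^sub>R (S + g) + (Z - x1)) \<bullet> (V - Z)"
      by (simp add: algebra_simps)
    then show ?thesis
      using lin_opt next_opt_V by (simp add: inner_diff_right)
  qed
  have fw: "(norm ((1 - \<sigma>) *\<^sub>R X + \<sigma> *\<^sub>R V - Z))^2
      \<le> (1 - 2*\<sigma>) * (norm ((X - Y) + (Y - Z)))^2 + \<sigma>^2 * (norm (X - V))^2"
    using norm_convex_step_sq_le[OF less_imp_le[OF \<open>0 < \<sigma>\<close>] obtuse] by simp
  have "\<eta> * ?lhs = u \<bullet> ((X - Y) + (Y - Z)) - 1/2 * (norm (Y - Z))^2
      + 1/6 * ((norm ((1 - \<sigma>) *\<^sub>R X + \<sigma> *\<^sub>R V - Z))^2 - (norm (X - Y))^2)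
      - (\<eta> *\<^sub>R S + (Y - x1)) \<bullet> (Z - Y)"
    using \<open>0 < \<eta>\<close> unfolding u_def power2_norm_eq_inner
    by (simp add: inner_add_right inner_diff_left inner_diff_right inner_commute
        field_simps)
  also have "\<dots> \<le> u \<bullet> ((X - Y) + (Y - Z)) - 1/2 * (norm (Y - Z))^2
      + 1/6 * ((1 - 2*\<sigma>) * (norm ((X - Y) + (Y - Z)))^2 - (norm (X - Y))^2)
      + \<sigma>^2/6 * (norm (X - V))^2"
    using fw prev_opt by (simp add: field_simps)
  also have "\<dots> \<le> 4 / (3*\<sigma>) * (norm u)^2 + \<sigma>^2/6 * (norm (X - V))^2"
    using quadratic_potential_le[OF \<open>0 < \<sigma>\<close> \<open>\<sigma> \<le> 1\<close> stable, of "X - Y"] by linarith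
  also have "\<dots> = \<eta> * ?rhs"
    using \<open>0 < \<eta>\<close> \<open>0 < \<sigma>\<close> by (simp add: u_def field_simps power2_eq_square)
  finally show ?thesis
    using \<open>0 < \<eta>\<close> by simp
qed

lemma ofw_phi_diff:
  assumes "1 \<le> t"
  shows "ofw_phi \<eta> g x y t - ofw_phi \<eta> g x y (t - 1)
    = g t \<bullet> x t - (\<Sum>s=1..t. g s) \<bullet> y (t + 1) + (\<Sum>s=1..t-1. g s) \<bullet> y t
      + 1 / (6*\<eta>) * ((norm (x (t + 1) - y (t + 1)))^2 - (norm (x t - y t))^2)
      - 1 / (2*\<eta>) * ((norm (y (t + 1) - x 1))^2 - (norm (y t - x 1))^2)"
proof -
  obtain m where t: "t = Suc m"
    using assms by (cases t) auto
  show ?thesis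
    unfolding ofw_phi_def t
    by (simp add: sum_subtractf inner_sum_left algebra_simps)
qed

lemma ofw_step_size_constants:
  fixes T :: nat and L D \<eta> \<sigma> :: real
  assumes "T \<ge> 3" "L > 0" "D > 0"
    and eta_def: "\<eta> = D / (2*L) * (3 / real T) powr (3/4)"
    and sigma_def: "\<sigma> = min 1 (sqrt (3 / real T))"
  shows "0 < \<eta>" "0 < \<sigma>" "\<sigma> \<le> 1"
    and "4*\<eta> / (3*\<sigma>) = 2*D / (L * 3 powr (3/4) * real T powr (1/4))"
    and "\<sigma>^2 / (6*\<eta>) = L / (D * 3 powr (3/4) * real T powr (1/4))"
proof -
  define r where "r = (3 / real T) powr (1/4)"
  have "real T > 0"
    using \<open>T \<ge> 3\<close> by simp
  then have "r > 0"
    by (simp add: r_def)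
  have eta: "\<eta> = D / (2*L) * r^3"
    using \<open>r > 0\<close> by (simp add: eta_def r_def powr_powr flip: powr_realpow)
  have "sqrt (3 / real T) = r^2"
    using \<open>r > 0\<close> \<open>real T > 0\<close> by (simp add: r_def powr_powr powr_half_sqrt flip: powr_realpow)
  moreover have "sqrt (3 / real T) \<le> 1"
    using \<open>T \<ge> 3\<close> by simp
  ultimately have sigma: "\<sigma> = r^2"
    by (simp add: sigma_def)
  have scale: "3 powr (3/4) * real T powr (1/4) = 3 / r"
    using \<open>real T > 0\<close>
    by (simp add: r_def powr_divide field_simps flip: powr_add)
  show "4*\<eta> / (3*\<sigma>) = 2*D / (L * 3 powr (3/4) * real T powr (1/4))"
    and "\<sigma>^2 / (6*\<eta>) = L / (D * 3 powr (3/4) * real T powr (1/4))"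
    unfolding eta sigma mult.assoc scale using \<open>r > 0\<close> \<open>L > 0\<close> \<open>D > 0\<close>
    by (simp_all add: field_simps power2_eq_square power3_eq_cube)
  show "0 < \<eta>" "0 < \<sigma>"
    using eta sigma \<open>r > 0\<close> \<open>L > 0\<close> \<open>D > 0\<close> by simp_all
  show "\<sigma> \<le> 1"
    by (simp add: sigma_def)
qed

theorem lemma1:
  fixes T :: nat and L D \<eta> \<sigma> :: real and K :: "'a::euclidean_space set"
    and g x v y :: "nat \<Rightarrow> 'a"
  assumes T3: "T \<ge> 3" and Lpos: "L > 0" and Dpos: "D > 0"
    and Kne: "K \<noteq> {}" and Kclosed: "closed K" and Kconv: "convex K"
    and Kdiam: "\<forall>a\<in>K. \<forall>b\<in>K. norm (a - b) \<le> D"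
    and gbound: "\<forall>t\<in>{1..T}. norm (g t) \<le> L"
    and eta_def: "\<eta> = D / (2*L) * (3 / real T) powr (3/4)"
    and sigma_def: "\<sigma> = min 1 (sqrt (3 / real T))"
    and x1: "x 1 \<in> K"
    and v_in: "\<forall>t\<in>{1..T}. v t \<in> K"
    and v_min: "\<forall>t\<in>{1..T}. \<forall>w\<in>K.
        (\<eta> *\<^sub>R (\<Sum>s=1..t. g s) + (x t - x 1)) \<bullet> v t
          \<le> (\<eta> *\<^sub>R (\<Sum>s=1..t. g s) + (x t - x 1)) \<bullet> w"
    and x_step: "\<forall>t\<in>{1..T}. x (t+1) = (1 - \<sigma>) *\<^sub>R x t + \<sigma> *\<^sub>R v t"
    and y1: "y 1 = x 1"
    and y_in: "\<forall>t\<in>{1..T}. y (t+1) \<in> K"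
    and y_min: "\<forall>t\<in>{1..T}. \<forall>w\<in>K.
        \<eta> * ((\<Sum>s=1..t. g s) \<bullet> y (t+1)) + 1/2 * (norm (y (t+1) - x 1))^2
          \<le> \<eta> * ((\<Sum>s=1..t. g s) \<bullet> w) + 1/2 * (norm (w - x 1))^2"
  shows "\<forall>t\<in>{1..T}. ofw_phi \<eta> g x y t - ofw_phi \<eta> g x y (t-1)
           \<le> 2*D / (L * 3 powr (3/4) * real T powr (1/4)) * (norm (g t))^2
             + L / (D * 3 powr (3/4) * real T powr (1/4)) * (norm (x t - v t))^2"
proof
  fix t assume t: "t \<in> {1..T}"
  then have t_pred: "1 \<le> t" "t - 1 + 1 = t" "t - 1 \<le> T" "t \<le> T"
    by auto
  note params = ofw_step_size_constants[OF T3 Lpos Dpos eta_def sigma_def]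
  note ftrl = ftrl_iterates_optimality[where g = g and x = x and y = y and \<eta> = \<eta>,
      OF Kconv Kclosed x1 y1 y_in y_min]
  have sum_t: "(\<Sum>s=1..t. g s) = (\<Sum>s=1..t-1. g s) + g t"
    using t by (cases t) auto
  have "ofw_phi \<eta> g x y t - ofw_phi \<eta> g x y (t - 1)
      \<le> 4*\<eta> / (3*\<sigma>) * (norm (g t))^2 + \<sigma>^2 / (6*\<eta>) * (norm (x t - v t))^2"
    unfolding ofw_phi_diff[OF \<open>1 \<le> t\<close>] sum_t x_step[rule_format, OF t]
  proof (rule ofw_potential_increment_le[OF params(1-3)])
    show "0 \<le> (\<eta> *\<^sub>R (\<Sum>s=1..t-1. g s) + (y t - x 1)) \<bullet> (y (t + 1) - y t)"
      using ftrl(2)[of "t - 1" "y (t + 1)"] ftrl(1)[of t] t_pred by simp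
    show "0 \<le> (\<eta> *\<^sub>R ((\<Sum>s=1..t-1. g s) + g t) + (y (t + 1) - x 1)) \<bullet> (y t - y (t + 1))"
      using ftrl(2)[of t "y t"] ftrl(1)[of "t - 1"] t_pred sum_t by simp
    show "0 \<le> (\<eta> *\<^sub>R ((\<Sum>s=1..t-1. g s) + g t) + (y (t + 1) - x 1)) \<bullet> (v t - y (t + 1))"
      using ftrl(2)[of t "v t"] v_in t t_pred sum_t by simp
    show "(\<eta> *\<^sub>R ((\<Sum>s=1..t-1. g s) + g t) + (x t - x 1)) \<bullet> v t
        \<le> (\<eta> *\<^sub>R ((\<Sum>s=1..t-1. g s) + g t) + (x t - x 1)) \<bullet> y (t + 1)"
      using v_min[rule_format, OF t ftrl(1)[OF \<open>t \<le> T\<close>]] unfolding sum_t .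
  qed
  then show "ofw_phi \<eta> g x y t - ofw_phi \<eta> g x y (t - 1)
      \<le> 2*D / (L * 3 powr (3/4) * real T powr (1/4)) * (norm (g t))^2
        + L / (D * 3 powr (3/4) * real T powr (1/4)) * (norm (x t - v t))^2"
    unfolding params(4,5) .
qed

end
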